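(* For positive integers $N,S$, let $e_n(s)$ ($1\le n\le N$, $1\le s\le S$) be drawn independently and uniformly at random from $\{-1,1\}$ and write $G_{N,S}(s)=(e_1(s),\dots,e_N(s))$. For every $\varepsilon>0$, \[ \mathbb{P}\Bigg[\Phi_k(G_{N,S})\le(1+\varepsilon)\sqrt{2N\log\left(\binom{SN}{k}-\binom{S(N-1)}{k}\right)}\ \text{ for all } k \text{ with } 2\le k<SN\Bigg]\to 1 \] as $N\to\infty$.
   Context: For a map $G_{N,S}:\{1,\dots,S\}\to\{-1,+1\}^N$, $G_{N,S}(s)=(e_1(s),\dots,e_N(s))$, the cross-correlation measure of order $k$ is \[ \Phi_k(G_{N,S})=\max\left|\sum_{n=1}^M e_{n+d_1}(s_1)\cdots e_{n+d_k}(s_k)\right|, \] the maximum taken over all integers $M,d_1,\dots,d_k$ and $1\le s_1,\dots,s_k\le S$ with $0\le d_1\le\dots\le d_k<M+d_k\le N$ and $d_i\ne d_j$ whenever $s_i=s_j$. $\log$ is the natural logarithm. *)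

theory Defs
  imports "HOL-Probability.Probability"
begin

text \<open>A family of S binary sequences of length N: e (n, s) = e_n(s) for
  1 \<le> n \<le> N, 1 \<le> s \<le> S, values in {-1,1}; extensional outside.\<close>
definition sign_families :: "nat \<Rightarrow> nat \<Rightarrow> (nat \<times> nat \<Rightarrow> int) set" where
  "sign_families N S = ({1..N} \<times> {1..S}) \<rightarrow>\<^sub>E {-1, 1}"

definition admissible :: "nat \<Rightarrow> nat \<Rightarrow> nat \<Rightarrow> nat \<Rightarrow> (nat \<Rightarrow> nat) \<Rightarrow> (nat \<Rightarrow> nat) \<Rightarrow> bool" where
  "admissible k N S M d s \<longleftrightarrow>
     d \<in> {1..k} \<rightarrow>\<^sub>E {0..N} \<and> s \<in> {1..k} \<rightarrow>\<^sub>E {1..S} \<and> M \<in> {1..N} \<and>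
     (\<forall>i j. 1 \<le> i \<and> i \<le> j \<and> j \<le> k \<longrightarrow> d i \<le> d j) \<and>
     d k < M + d k \<and> M + d k \<le> N \<and>
     (\<forall>i\<in>{1..k}. \<forall>j\<in>{1..k}. i \<noteq> j \<and> s i = s j \<longrightarrow> d i \<noteq> d j)"

definition Phi :: "nat \<Rightarrow> nat \<Rightarrow> nat \<Rightarrow> (nat \<times> nat \<Rightarrow> int) \<Rightarrow> int" where
  "Phi k N S e = Max {\<bar>\<Sum>n=1..M. \<Prod>i=1..k. e (n + d i, s i)\<bar> | M d s. admissible k N S M d s}"

end

theory Submission
  imports Defs
begin

text \<open>Every correlation sum in \<open>Phi k\<close> is a window sum, over \<open>a < n \<le> b\<close>, of the products of
  \<open>e (n + d, s)\<close> over a pattern \<open>P\<close> of \<open>k\<close> pairs \<open>(d, s)\<close> with smallest shift \<open>0\<close>; there are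
  \<open>A\<^sub>k = C(SN, k) - C(S(N - 1), k)\<close> such patterns. The pair of largest shift contributes a fresh
  coordinate at every \<open>n\<close>, so a window sum of \<open>L\<close> terms has moment generating function
  \<open>cosh(\<lambda>)\<^sup>L\<close> and tails \<open>2 exp(-u\<^sup>2 / (2 L))\<close>. Chaining over windows with endpoints on a grid of
  step about \<open>N / K\<close> leaves \<open>O(K\<^sup>2)\<close> long and \<open>O(N\<^sup>2)\<close> short windows per pattern, and the union
  bound over patterns and \<open>k\<close> gives an error of order \<open>\<Sum>\<^sub>k (K\<^sup>2 A\<^sub>k\<^sup>-\<^sup>\<delta> + N\<^sup>2 A\<^sub>k\<^sup>-\<^sup>3)\<close>, which tends
  to \<open>0\<close> since \<open>A\<^sub>k \<ge> C(SN - 1, k - 1)\<close>.\<close>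

lemma cosh_le_exp_half_square: "cosh (x::real) \<le> exp (x\<^sup>2 / 2)"
proof -
  have "cosh y \<le> exp (y\<^sup>2 / 2)" if "y \<ge> 0" for y :: real
  proof -
    have hoeffding: "-(2*y) * (1/2) + ln (1 + (1/2) * (exp (2*y) - 1)) \<le> (2*y)\<^sup>2 / 8"
      using Hoeffdings_lemma_aux[of "2*y" "1/2"] that by simp
    have "1 + (1/2) * (exp (2*y) - 1) = exp y * cosh y"
      by (simp add: cosh_def field_simps exp_add[symmetric] mult_2)
    with hoeffding have "ln (cosh y) \<le> y\<^sup>2 / 2"
      by (simp add: ln_mult power2_eq_square)
    thus ?thesis by (metis cosh_real_pos exp_le_cancel_iff exp_ln)
  qed
  from this[of "\<bar>x\<bar>"] show ?thesis
    by (cases "x \<ge> 0") simp_all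
qed

lemma prod_in_signs:
  "finite A \<Longrightarrow> (\<And>x. x \<in> A \<Longrightarrow> f x \<in> {-1, 1::int}) \<Longrightarrow> prod f A \<in> {-1, 1}"
proof (induction A rule: finite_induct)
  case (insert x F)
  then have "f x = 1 \<or> f x = -1" "prod f F = 1 \<or> prod f F = -1" by auto
  then show ?case using insert(1,2) by auto
qed auto

lemma sign_families_value:
  "e \<in> sign_families N S \<Longrightarrow> q \<in> {1..N} \<times> {1..S} \<Longrightarrow> e q \<in> {-1, 1}"
  unfolding sign_families_def by (auto simp: PiE_iff)

lemma finite_sign_families: "finite (sign_families N S)"
  unfolding sign_families_def by (intro finite_PiE) auto

lemma sign_families_nonempty: "sign_families N S \<noteq> {}"
  unfolding sign_families_def by (simp add: PiE_eq_empty_iff)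

definition flip_sign :: "'a \<Rightarrow> ('a \<Rightarrow> int) \<Rightarrow> 'a \<Rightarrow> int" where
  "flip_sign q e = e(q := - e q)"

lemma flip_sign_flip_sign [simp]: "flip_sign q (flip_sign q e) = e"
  by (simp add: flip_sign_def)

lemma flip_sign_in_sign_families:
  "e \<in> sign_families N S \<Longrightarrow> q \<in> {1..N} \<times> {1..S} \<Longrightarrow> flip_sign q e \<in> sign_families N S"
  unfolding sign_families_def flip_sign_def by (auto simp: PiE_iff extensional_def)

lemma sum_sign_families_flip_sign:
  assumes "q \<in> {1..N} \<times> {1..S}"
  shows "(\<Sum>e\<in>sign_families N S. f (flip_sign q e)) = (\<Sum>e\<in>sign_families N S. f e)"
  by (rule sum.reindex_bij_witness[where i="flip_sign q" and j="flip_sign q"])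
     (auto intro: flip_sign_in_sign_families[OF _ assms])

text \<open>If \<open>\<phi>\<close> and \<open>g\<close> do not see the coordinate \<open>q\<close>, then \<open>e q * g e\<close> is a uniform sign
  independent of \<open>\<phi>\<close>: averaging each family with its flip at \<open>q\<close> turns the exponential into \<open>cosh\<close>.\<close>
lemma sum_mult_exp_independent_sign:
  fixes \<phi> :: "(nat \<times> nat \<Rightarrow> int) \<Rightarrow> real" and l :: real and g :: "(nat \<times> nat \<Rightarrow> int) \<Rightarrow> int"
  assumes q: "q \<in> {1..N} \<times> {1..S}"
    and \<phi>: "\<And>e. \<phi> (flip_sign q e) = \<phi> e"
    and g: "\<And>e. g (flip_sign q e) = g e" "\<And>e. e \<in> sign_families N S \<Longrightarrow> g e \<in> {-1, 1}"
  shows "(\<Sum>e\<in>sign_families N S. \<phi> e * exp (l * of_int (e q * g e)))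
       = cosh l * (\<Sum>e\<in>sign_families N S. \<phi> e)"
proof -
  let ?F = "sign_families N S" and ?f = "\<lambda>e. \<phi> e * exp (l * of_int (e q * g e))"
  have pair: "?f e + ?f (flip_sign q e) = 2 * cosh l * \<phi> e" if "e \<in> ?F" for e
  proof -
    have "e q * g e \<in> {-1, 1}" using sign_families_value[OF that q] g(2)[OF that] by auto
    moreover have "flip_sign q e q * g (flip_sign q e) = - (e q * g e)"
      using g(1)[of e] unfolding flip_sign_def by simp
    ultimately show ?thesis
      by (auto simp: \<phi> cosh_def algebra_simps simp del: of_int_mult)
  qed
  have "2 * (\<Sum>e\<in>?F. ?f e) = (\<Sum>e\<in>?F. ?f e) + (\<Sum>e\<in>?F. ?f (flip_sign q e))"
    by (simp only: sum_sign_families_flip_sign[OF q, of ?f] mult_2)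
  also have "\<dots> = (\<Sum>e\<in>?F. 2 * cosh l * \<phi> e)"
    by (simp only: sum.distrib[symmetric]) (intro sum.cong refl pair)
  also have "\<dots> = 2 * (cosh l * (\<Sum>e\<in>?F. \<phi> e))"
    by (simp add: sum_distrib_left mult.assoc)
  finally show ?thesis by simp
qed

text \<open>A pattern \<open>P\<close> is a set of (shift, sequence index) pairs.\<close>
definition window_sum :: "(nat \<times> nat) set \<Rightarrow> nat \<Rightarrow> nat \<Rightarrow> (nat \<times> nat \<Rightarrow> int) \<Rightarrow> int" where
  "window_sum P a b e = (\<Sum>n\<in>{a<..b}. \<Prod>p\<in>P. e (n + fst p, snd p))"

lemma window_sum_split:
  "a \<le> c \<Longrightarrow> c \<le> b \<Longrightarrow> window_sum P a b e = window_sum P a c e + window_sum P c b e"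
proof -
  assume "a \<le> c" "c \<le> b"
  then have "{a<..b} = {a<..c} \<union> {c<..b}" "{a<..c} \<inter> {c<..b} = {}" by auto
  thus ?thesis unfolding window_sum_def by (simp add: sum.union_disjoint)
qed

lemma window_sum_nonzero_imp_less: "window_sum P a b e \<noteq> 0 \<Longrightarrow> a < b"
  by (cases "a < b") (auto simp: window_sum_def)

text \<open>\<open>(w, s\<^sub>0)\<close> is a pattern element of maximal shift, so the summand at \<open>n\<close> is the only one
  involving the coordinate \<open>(n + w, s\<^sub>0)\<close>; the summands thus behave like independent signs.\<close>
locale sign_pattern =
  fixes P :: "(nat \<times> nat) set" and w s\<^sub>0 S :: nat
  assumes finite_pattern: "finite P" and top_in_pattern: "(w, s\<^sub>0) \<in> P"
    and pattern_bounded: "\<And>p. p \<in> P \<Longrightarrow> fst p \<le> w \<and> snd p \<in> {1..S}"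
begin

lemma window_sum_flip_sign_beyond:
  "b + w < m \<Longrightarrow> window_sum P a b (flip_sign (m, s) e) = window_sum P a b e"
  unfolding window_sum_def flip_sign_def
  by (intro sum.cong prod.cong refl) (use pattern_bounded in fastforce)

lemma sum_exp_window_sum:
  fixes l :: real
  assumes "b + w \<le> N"
  shows "(\<Sum>e\<in>sign_families N S. exp (l * window_sum P a b e))
       = card (sign_families N S) * cosh l ^ (b - a)"
  using assms
proof (induction b)
  case 0
  then show ?case by (simp add: window_sum_def)
next
  case (Suc b)
  show ?case
  proof (cases "Suc b \<le> a")
    case True
    then show ?thesis by (simp add: window_sum_def)
  next
    case False
    let ?q = "(Suc b + w, s\<^sub>0)"
    define g where "g e = (\<Prod>p\<in>P - {(w, s\<^sub>0)}. e (Suc b + fst p, snd p))" for e :: "nat \<times> nat \<Rightarrow> int"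
    have q: "?q \<in> {1..N} \<times> {1..S}" using Suc.prems pattern_bounded[OF top_in_pattern] by auto
    have "{a<..Suc b} = insert (Suc b) {a<..b}" using False by auto
    then have step: "window_sum P a (Suc b) e = window_sum P a b e + e ?q * g e" for e
      unfolding window_sum_def g_def using top_in_pattern finite_pattern
      by (simp add: prod.remove[of _ "(w, s\<^sub>0)"])
    have g_flip: "g (flip_sign ?q e) = g e" for e
      unfolding g_def flip_sign_def by (intro prod.cong refl) auto
    have g_sign: "g e \<in> {-1, 1}" if "e \<in> sign_families N S" for e
      unfolding g_def using finite_pattern
      by (intro prod_in_signs sign_families_value[OF that]) (use pattern_bounded Suc.prems in force)+
    have "(\<Sum>e\<in>sign_families N S. exp (l * window_sum P a (Suc b) e))
        = (\<Sum>e\<in>sign_families N S. exp (l * window_sum P a b e) * exp (l * of_int (e ?q * g e)))"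
      by (simp add: step distrib_left exp_add del: of_int_mult)
    also have "\<dots> = cosh l * (\<Sum>e\<in>sign_families N S. exp (l * window_sum P a b e))"
      using window_sum_flip_sign_beyond[of b "Suc b + w"]
      by (intro sum_mult_exp_independent_sign[where \<phi>="\<lambda>e. exp (l * window_sum P a b e)"]
          q g_flip g_sign) simp_all
    also have "\<dots> = card (sign_families N S) * cosh l ^ (Suc b - a)"
      using Suc False by (simp add: Suc_diff_le)
    finally show ?thesis .
  qed
qed

lemma card_window_sum_ge:
  fixes l v :: real
  assumes "b + w \<le> N"
  shows "real (card {e \<in> sign_families N S. v \<le> l * window_sum P a b e})
       \<le> card (sign_families N S) * exp (l\<^sup>2 * real (b - a) / 2 - v)"
proof -
  let ?F = "sign_families N S"
  let ?X = "{e \<in> ?F. v \<le> l * window_sum P a b e}"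
  have "real (card ?X) * exp v = (\<Sum>e\<in>?X. exp v)" by simp
  also have "\<dots> \<le> (\<Sum>e\<in>?X. exp (l * window_sum P a b e))"
    by (rule sum_mono) simp
  also have "\<dots> \<le> (\<Sum>e\<in>?F. exp (l * window_sum P a b e))"
    by (rule sum_mono2[OF finite_sign_families]) auto
  also have "\<dots> = card ?F * cosh l ^ (b - a)" by (rule sum_exp_window_sum[OF assms])
  also have "\<dots> \<le> card ?F * exp (l\<^sup>2 / 2) ^ (b - a)"
    by (intro mult_left_mono power_mono cosh_le_exp_half_square) (auto simp: cosh_def intro: add_nonneg_nonneg)
  also have "\<dots> = card ?F * exp (l\<^sup>2 * real (b - a) / 2)"
    by (simp add: exp_of_nat_mult[symmetric] algebra_simps)
  finally have "real (card ?X) \<le> card ?F * exp (l\<^sup>2 * real (b - a) / 2) / exp v"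
    by (simp add: field_simps)
  thus ?thesis by (simp add: exp_diff)
qed

lemma card_abs_window_sum_ge:
  fixes u :: real
  assumes "b + w \<le> N" and "a < b" and "b - a \<le> n" and "u \<ge> 0"
  shows "real (card {e \<in> sign_families N S. u \<le> \<bar>window_sum P a b e\<bar>})
       \<le> 2 * card (sign_families N S) * exp (- u\<^sup>2 / (2 * real n))"
proof -
  let ?F = "sign_families N S"
  let ?X = "\<lambda>l::real. {e \<in> ?F. u\<^sup>2 / n \<le> l * window_sum P a b e}"
  have n: "real n > 0" "real (b - a) \<le> n" using assms by simp_all
  have sub: "{e \<in> ?F. u \<le> \<bar>window_sum P a b e\<bar>} \<subseteq> ?X (u / n) \<union> ?X (- u / n)"
  proof
    fix e assume "e \<in> {e \<in> ?F. u \<le> \<bar>window_sum P a b e\<bar>}"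
    then have "e \<in> ?F" "u\<^sup>2 / n \<le> u * \<bar>window_sum P a b e\<bar> / n"
      using \<open>u \<ge> 0\<close> n by (auto simp: power2_eq_square intro: mult_left_mono divide_right_mono)
    then show "e \<in> ?X (u / n) \<union> ?X (- u / n)"
      by (cases "window_sum P a b e \<ge> 0") auto
  qed
  have tail: "real (card (?X l)) \<le> card ?F * exp (- u\<^sup>2 / (2 * n))" if "l\<^sup>2 = u\<^sup>2 / n\<^sup>2" for l
  proof -
    have "l\<^sup>2 * real (b - a) / 2 \<le> l\<^sup>2 * n / 2"
      using n by (simp add: mult_left_mono)
    also have "\<dots> = u\<^sup>2 / (2 * n)"
      using n that by (simp add: field_simps power2_eq_square)
    finally have "exp (l\<^sup>2 * real (b - a) / 2 - u\<^sup>2 / n) \<le> exp (- u\<^sup>2 / (2 * n))" by simp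
    then show ?thesis
      using card_window_sum_ge[OF assms(1), of "u\<^sup>2 / n" l a]
      by (meson order_trans mult_left_mono of_nat_0_le_iff)
  qed
  have "real (card {e \<in> ?F. u \<le> \<bar>window_sum P a b e\<bar>}) \<le> real (card (?X (u / n) \<union> ?X (- u / n)))"
    using finite_sign_families by (intro of_nat_mono card_mono[OF _ sub]) auto
  also have "\<dots> \<le> real (card (?X (u / n))) + real (card (?X (- u / n)))"
    by (simp flip: of_nat_add add: card_Un_le)
  also have "\<dots> \<le> 2 * card ?F * exp (- u\<^sup>2 / (2 * n))"
    using tail[of "u / n"] tail[of "- u / n"] by (simp add: power_divide)
  finally show ?thesis by simp
qed

end

text \<open>Chaining: after this reduction only \<open>O((L/h)\<^sup>2 + L\<^sup>2)\<close> windows need a tail bound, the long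
  grid windows with length \<open>N\<close> and the short ones with length \<open>h\<close>.\<close>
lemma large_window_sum_on_grid_or_short:
  fixes T u\<^sub>1 u\<^sub>2 :: real and h L :: nat
  assumes h: "h \<ge> 1" and u: "0 < u\<^sub>1" "0 < u\<^sub>2" "u\<^sub>1 + 2 * u\<^sub>2 \<le> T"
    and b: "b \<le> L" and large: "T < \<bar>window_sum P a b e\<bar>"
  shows "(\<exists>i j. i < j \<and> j \<le> L div h \<and> u\<^sub>1 \<le> \<bar>window_sum P (h * i) (h * j) e\<bar>)
       \<or> (\<exists>a' b'. a' < b' \<and> b' \<le> L \<and> b' - a' < h \<and> u\<^sub>2 \<le> \<bar>window_sum P a' b' e\<bar>)"
proof -
  define i where "i = (a + h - 1) div h"
  define j where "j = b div h"
  have "h * i + (a + h - 1) mod h = a + h - 1" "(a + h - 1) mod h < h"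
    using h unfolding i_def by simp_all
  then have i: "a \<le> h * i" "h * i < a + h" by linarith+
  have "h * j + b mod h = b" "b mod h < h"
    using h unfolding j_def by simp_all
  then have j: "h * j \<le> b" "b < h * j + h" by linarith+
  have less: "x < y" if "u\<^sub>2 \<le> \<bar>window_sum P x y e\<bar>" for x y
    using that u(2) by (intro window_sum_nonzero_imp_less[of P x y e]) auto
  show ?thesis
  proof (cases "i \<le> j")
    case True
    then have ij: "h * i \<le> h * j" by simp
    with j have "h * i \<le> b" by linarith
    then have "window_sum P a b e
        = window_sum P a (h * i) e + window_sum P (h * i) (h * j) e + window_sum P (h * j) b e"
      using window_sum_split[OF i(1) \<open>h * i \<le> b\<close>] window_sum_split[OF ij j(1)] by simp
    then have "\<bar>window_sum P a b e\<bar> \<le> \<bar>window_sum P a (h * i) e\<bar> + \<bar>window_sum P (h * i) (h * j) e\<bar>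
        + \<bar>window_sum P (h * j) b e\<bar>"
      by (metis abs_triangle_ineq add_right_mono order_trans)
    then have "T < real_of_int \<bar>window_sum P a (h * i) e\<bar> + \<bar>window_sum P (h * i) (h * j) e\<bar>
        + \<bar>window_sum P (h * j) b e\<bar>"
      using large by (metis of_int_add of_int_le_iff order_less_le_trans)
    then have "u\<^sub>1 \<le> \<bar>window_sum P (h * i) (h * j) e\<bar>
        \<or> u\<^sub>2 \<le> \<bar>window_sum P a (h * i) e\<bar> \<or> u\<^sub>2 \<le> \<bar>window_sum P (h * j) b e\<bar>"
      using u by linarith
    then show ?thesis
    proof (elim disjE)
      assume grid: "u\<^sub>1 \<le> \<bar>window_sum P (h * i) (h * j) e\<bar>"
      then have "window_sum P (h * i) (h * j) e \<noteq> 0" using u(1) by auto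
      then have "i < j" by (auto dest: window_sum_nonzero_imp_less)
      moreover have "j \<le> L div h" unfolding j_def using b by (rule div_le_mono)
      ultimately show ?thesis using grid by blast
    next
      assume short: "u\<^sub>2 \<le> \<bar>window_sum P a (h * i) e\<bar>"
      have "a < h * i" "h * i \<le> L" "h * i - a < h" using less[OF short] i \<open>h * i \<le> b\<close> b by auto
      with short show ?thesis by blast
    next
      assume short: "u\<^sub>2 \<le> \<bar>window_sum P (h * j) b e\<bar>"
      have "h * j < b" "b - h * j < h" using less[OF short] j by auto
      with short b show ?thesis by blast
    qed
  next
    case False
    then have "h * j + h \<le> h * i" using mult_le_mono2[of "Suc j" i h] by simp
    then have "b - a < h" using i j by linarith
    moreover have short: "u\<^sub>2 \<le> \<bar>window_sum P a b e\<bar>" using u large by linarith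
    ultimately show ?thesis using less[OF short] b by blast
  qed
qed

lemma card_UN_le_card_mult:
  assumes "finite I" and "\<And>i. i \<in> I \<Longrightarrow> real (card (A i)) \<le> c"
  shows "real (card (\<Union>i\<in>I. A i)) \<le> real (card I) * c"
proof -
  have "real (card (\<Union>i\<in>I. A i)) \<le> (\<Sum>i\<in>I. real (card (A i)))"
    using card_UN_le[OF assms(1), of A] by (simp flip: of_nat_sum)
  also have "\<dots> \<le> real (card I) * c"
    using assms(2) by (rule sum_bounded_above)
  finally show ?thesis .
qed

lemma real_card_square_interval: "real (card ({0..m} \<times> {0..m})) = (real m + 1)\<^sup>2"
  by (simp add: card_cartesian_product power2_eq_square algebra_simps)

context sign_pattern
begin

lemma card_large_window_sum:
  fixes T \<eta> :: real and h :: nat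
  assumes h: "h \<ge> 1" and T: "T > 0" and \<eta>: "0 < \<eta>" "\<eta> < 1"
  shows "real (card {e \<in> sign_families N S. \<exists>a b. b \<le> N - w \<and> T < \<bar>window_sum P a b e\<bar>})
    \<le> 2 * card (sign_families N S) *
        ((real ((N - w) div h) + 1)\<^sup>2 * exp (- ((1 - \<eta>) * T)\<^sup>2 / (2 * real N))
         + (real (N - w) + 1)\<^sup>2 * exp (- (\<eta> * T / 2)\<^sup>2 / (2 * real h)))"
proof -
  let ?F = "sign_families N S"
  define L where "L = N - w"
  define u\<^sub>1 where "u\<^sub>1 = (1 - \<eta>) * T"
  define u\<^sub>2 where "u\<^sub>2 = \<eta> * T / 2"
  define Grid where "Grid ij = {e \<in> ?F. fst ij < snd ij \<and>
      u\<^sub>1 \<le> \<bar>window_sum P (h * fst ij) (h * snd ij) e\<bar>}" for ij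
  define Short where "Short ab = {e \<in> ?F. fst ab < snd ab \<and> snd ab - fst ab < h \<and>
      u\<^sub>2 \<le> \<bar>window_sum P (fst ab) (snd ab) e\<bar>}" for ab
  have u: "0 < u\<^sub>1" "0 < u\<^sub>2" "u\<^sub>1 + 2 * u\<^sub>2 \<le> T" using T \<eta> by (simp_all add: u\<^sub>1_def u\<^sub>2_def algebra_simps)
  have cover: "{e \<in> ?F. \<exists>a b. b \<le> L \<and> T < \<bar>window_sum P a b e\<bar>}
      \<subseteq> (\<Union>ij\<in>{0..L div h} \<times> {0..L div h}. Grid ij) \<union> (\<Union>ab\<in>{0..L} \<times> {0..L}. Short ab)"
  proof
    fix e assume "e \<in> {e \<in> ?F. \<exists>a b. b \<le> L \<and> T < \<bar>window_sum P a b e\<bar>}"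
    then obtain a b where e: "e \<in> ?F" and "b \<le> L" "T < \<bar>window_sum P a b e\<bar>" by blast
    from large_window_sum_on_grid_or_short[OF h u this(2,3)]
    show "e \<in> (\<Union>ij\<in>{0..L div h} \<times> {0..L div h}. Grid ij) \<union> (\<Union>ab\<in>{0..L} \<times> {0..L}. Short ab)"
    proof (elim disjE exE conjE)
      fix i j assume "i < j" "j \<le> L div h" "u\<^sub>1 \<le> \<bar>window_sum P (h * i) (h * j) e\<bar>"
      then have "e \<in> Grid (i, j)" "(i, j) \<in> {0..L div h} \<times> {0..L div h}" using e by (auto simp: Grid_def)
      then show ?thesis by blast
    next
      fix a' b' assume "a' < b'" "b' \<le> L" "b' - a' < h" "u\<^sub>2 \<le> \<bar>window_sum P a' b' e\<bar>"
      then have "e \<in> Short (a', b')" "(a', b') \<in> {0..L} \<times> {0..L}" using e by (auto simp: Short_def)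
      then show ?thesis by blast
    qed
  qed
  have card_Grid: "real (card (Grid ij)) \<le> 2 * card ?F * exp (- u\<^sub>1\<^sup>2 / (2 * real N))"
    if "ij \<in> {0..L div h} \<times> {0..L div h}" for ij
  proof (cases "fst ij < snd ij")
    case True
    have "h * snd ij \<le> L" using that h by (auto intro: order_trans[OF mult_le_mono2 times_div_less_eq_dividend])
    moreover have "0 < h * snd ij" using True h by simp
    ultimately have "h * snd ij + w \<le> N" "h * snd ij - h * fst ij \<le> N"
      unfolding L_def by linarith+
    moreover have "h * fst ij < h * snd ij" using True h by simp
    ultimately show ?thesis
      using card_abs_window_sum_ge[of "h * snd ij" N "h * fst ij" N u\<^sub>1] True less_imp_le[OF u(1)]
      unfolding Grid_def by simp
  qed (simp add: Grid_def)
  have card_Short: "real (card (Short ab)) \<le> 2 * card ?F * exp (- u\<^sub>2\<^sup>2 / (2 * real h))"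
    if "ab \<in> {0..L} \<times> {0..L}" for ab
  proof (cases "fst ab < snd ab \<and> snd ab - fst ab < h")
    case True
    moreover have "snd ab + w \<le> N" using that True unfolding L_def by auto
    ultimately show ?thesis
      using card_abs_window_sum_ge[of "snd ab" N "fst ab" h u\<^sub>2] less_imp_le[OF u(2)]
      unfolding Short_def by simp
  qed (auto simp: Short_def)
  let ?Grids = "\<Union>ij\<in>{0..L div h} \<times> {0..L div h}. Grid ij"
  let ?Shorts = "\<Union>ab\<in>{0..L} \<times> {0..L}. Short ab"
  have "?Grids \<union> ?Shorts \<subseteq> ?F" by (auto simp: Grid_def Short_def)
  then have "finite (?Grids \<union> ?Shorts)" by (rule finite_subset) (rule finite_sign_families)
  then have "real (card {e \<in> ?F. \<exists>a b. b \<le> L \<and> T < \<bar>window_sum P a b e\<bar>})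
      \<le> real (card (?Grids \<union> ?Shorts))"
    by (intro of_nat_mono card_mono[OF _ cover])
  also have "\<dots> \<le> real (card ?Grids) + real (card ?Shorts)"
    by (simp flip: of_nat_add add: card_Un_le)
  also have "\<dots> \<le> (real (L div h) + 1)\<^sup>2 * (2 * card ?F * exp (- u\<^sub>1\<^sup>2 / (2 * real N)))
        + (real L + 1)\<^sup>2 * (2 * card ?F * exp (- u\<^sub>2\<^sup>2 / (2 * real h)))"
  proof (rule add_mono)
    show "real (card ?Grids) \<le> (real (L div h) + 1)\<^sup>2 * (2 * card ?F * exp (- u\<^sub>1\<^sup>2 / (2 * real N)))"
      unfolding real_card_square_interval[symmetric]
      by (rule card_UN_le_card_mult, simp, rule card_Grid)
    show "real (card ?Shorts) \<le> (real L + 1)\<^sup>2 * (2 * card ?F * exp (- u\<^sub>2\<^sup>2 / (2 * real h)))"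
      unfolding real_card_square_interval[symmetric]
      by (rule card_UN_le_card_mult, simp, rule card_Short)
  qed
  finally show ?thesis unfolding L_def u\<^sub>1_def u\<^sub>2_def by (simp add: distrib_left mult_ac)
qed

end
text \<open>Patterns normalised to smallest shift \<open>0\<close>: these are the \<open>k\<close>-subsets of \<open>{0..<N} \<times> {1..S}\<close>
  not contained in \<open>{1..<N} \<times> {1..S}\<close>, whence the difference of binomials in the theorem.\<close>
definition anchored_patterns :: "nat \<Rightarrow> nat \<Rightarrow> nat \<Rightarrow> (nat \<times> nat) set set" where
  "anchored_patterns N S k = {P. P \<subseteq> {0..<N} \<times> {1..S} \<and> card P = k \<and> (\<exists>s. (0, s) \<in> P)}"

lemma finite_anchored_patterns: "finite (anchored_patterns N S k)"
  by (rule finite_subset[of _ "Pow ({0..<N} \<times> {1..S})"]) (auto simp: anchored_patterns_def)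

lemma real_card_anchored_patterns:
  "real (card (anchored_patterns N S k)) = real (S * N choose k) - real (S * (N - 1) choose k)"
proof -
  let ?U = "{0..<N} \<times> {1..S}" and ?U' = "{1..<N} \<times> {1..S}"
  let ?subsets = "\<lambda>A. {P. P \<subseteq> A \<and> card P = k}"
  have "anchored_patterns N S k = ?subsets ?U - ?subsets ?U'"
  proof -
    have "(\<exists>s. (0, s) \<in> P) \<longleftrightarrow> \<not> P \<subseteq> ?U'" if "P \<subseteq> ?U" for P
    proof
      assume "\<not> P \<subseteq> ?U'"
      then obtain x where "x \<in> P" "x \<notin> ?U'" by blast
      with that have "fst x = 0" by (cases x) auto
      with \<open>x \<in> P\<close> show "\<exists>s. (0, s) \<in> P" by (metis prod.collapse)
    qed auto
    then show ?thesis unfolding anchored_patterns_def by blast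
  qed
  moreover have "?subsets ?U' \<subseteq> ?subsets ?U" by auto
  moreover have "finite (?subsets ?U')" by (rule finite_subset[of _ "Pow ?U'"]) auto
  moreover have "card (?subsets ?U) = S * N choose k" "card (?subsets ?U') = S * (N - 1) choose k"
    by (simp_all add: n_subsets card_cartesian_product mult.commute)
  moreover have "S * (N - 1) choose k \<le> S * N choose k" by (intro binomial_right_mono) simp
  ultimately show ?thesis
    by (simp add: card_Diff_subset of_nat_diff)
qed

lemma anchored_pattern_sign_pattern:
  assumes "P \<in> anchored_patterns N S k" and "k \<ge> 1"
  shows "\<exists>s\<^sub>0. sign_pattern P (Max (fst ` P)) s\<^sub>0 S" and "Max (fst ` P) < N"
proof -
  have P: "P \<subseteq> {0..<N} \<times> {1..S}" "card P = k" using assms(1) by (auto simp: anchored_patterns_def)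
  from P(1) have "finite P" by (rule finite_subset) simp
  moreover have "P \<noteq> {}" using P(2) assms(2) by auto
  ultimately have "Max (fst ` P) \<in> fst ` P" by (intro Max_in) auto
  then obtain s\<^sub>0 where top: "(Max (fst ` P), s\<^sub>0) \<in> P" by force
  show "\<exists>s\<^sub>0. sign_pattern P (Max (fst ` P)) s\<^sub>0 S"
    using \<open>finite P\<close> top P(1) by (intro exI[of _ s\<^sub>0]) (auto simp: sign_pattern_def)
  show "Max (fst ` P) < N" using top P(1) by auto
qed

text \<open>Enumerate shift-sequence pairs lexicographically: the \<open>i\<close>-th pair has shift \<open>(i - 1) div S\<close>.\<close>
lemma admissible_exists:
  assumes "1 \<le> k" and "k < S * N"
  shows "\<exists>M d s. admissible k N S M d s"
proof -
  define d where "d = restrict (\<lambda>i. (i - 1) div S) {1..k}"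
  define s where "s = restrict (\<lambda>i. (i - 1) mod S + 1) {1..k}"
  have S: "S > 0" using assms by (cases S) auto
  have dk: "(k - 1) div S < N" using assms S by (simp add: less_mult_imp_div_less mult.commute)
  have d_mono: "(i - 1) div S \<le> (j - 1) div S" if "i \<le> j" for i j
    using that by (intro div_le_mono) simp
  have "d i \<noteq> d j" if "i \<in> {1..k}" "j \<in> {1..k}" "i \<noteq> j" "s i = s j" for i j
  proof
    assume "d i = d j"
    with that have "(i - 1) div S = (j - 1) div S" "(i - 1) mod S = (j - 1) mod S"
      by (auto simp: d_def s_def)
    then have "i - 1 = j - 1" by (metis div_mult_mod_eq)
    with that show False by auto
  qed
  moreover have "d \<in> {1..k} \<rightarrow>\<^sub>E {0..N}"
    using d_mono dk by (fastforce simp: d_def PiE_iff intro: order_trans[OF _ less_imp_le])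
  moreover have "s \<in> {1..k} \<rightarrow>\<^sub>E {1..S}" using S by (auto simp: s_def PiE_iff Suc_le_eq)
  ultimately have "admissible k N S 1 d s"
    using d_mono dk assms unfolding admissible_def by (auto simp: d_def)
  then show ?thesis by blast
qed

lemma Phi_attained:
  assumes "1 \<le> k" and "k < S * N"
  obtains M d s where "admissible k N S M d s"
    and "Phi k N S e = \<bar>\<Sum>n=1..M. \<Prod>i=1..k. e (n + d i, s i)\<bar>"
proof -
  let ?V = "{\<bar>\<Sum>n=1..M. \<Prod>i=1..k. e (n + d i, s i)\<bar> | M d s. admissible k N S M d s}"
  have "{(M, d, s). admissible k N S M d s}
      \<subseteq> {1..N} \<times> ({1..k} \<rightarrow>\<^sub>E {0..N}) \<times> ({1..k} \<rightarrow>\<^sub>E {1..S})"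
    unfolding admissible_def by auto
  then have "finite {(M, d, s). admissible k N S M d s}"
    by (rule finite_subset) (intro finite_cartesian_product finite_PiE; simp)
  moreover have "?V = (\<lambda>(M, d, s). \<bar>\<Sum>n=1..M. \<Prod>i=1..k. e (n + d i, s i)\<bar>)
      ` {(M, d, s). admissible k N S M d s}"
    by (auto simp: image_def)
  ultimately have "finite ?V" by simp
  moreover have "?V \<noteq> {}" using admissible_exists[OF assms] by blast
  ultimately have "Phi k N S e \<in> ?V" unfolding Phi_def by (rule Max_in)
  with that show ?thesis by blast
qed

text \<open>An admissible correlation sum is the window sum of the anchored pattern of the shifts
  \<open>d i - d 1\<close>, over the window \<open>{d 1 <.. d 1 + M}\<close>.\<close>
lemma correlation_sum_eq_window_sum:
  assumes adm: "admissible k N S M d s" and k: "1 \<le> k"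
  shows "\<exists>P\<in>anchored_patterns N S k. \<exists>a b. b \<le> N - Max (fst ` P)
           \<and> window_sum P a b e = (\<Sum>n=1..M. \<Prod>i=1..k. e (n + d i, s i))"
proof -
  have sP: "s \<in> {1..k} \<rightarrow>\<^sub>E {1..S}" and M: "M \<in> {1..N}" and Mk: "M + d k \<le> N"
    and mono: "\<And>i j. 1 \<le> i \<Longrightarrow> i \<le> j \<Longrightarrow> j \<le> k \<Longrightarrow> d i \<le> d j"
    and dist: "\<And>i j. i \<in> {1..k} \<Longrightarrow> j \<in> {1..k} \<Longrightarrow> i \<noteq> j \<Longrightarrow> s i = s j \<Longrightarrow> d i \<noteq> d j"
    using adm unfolding admissible_def by blast+
  have d1: "d 1 \<le> d i" and dk: "d i \<le> d k" if "i \<in> {1..k}" for i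
    using mono[of 1 i] mono[of i k] that by auto
  define f where "f i = (d i - d 1, s i)" for i
  define P where "P = f ` {1..k}"
  have inj: "inj_on f {1..k}"
  proof (rule inj_onI)
    fix i j assume ij: "i \<in> {1..k}" "j \<in> {1..k}" "f i = f j"
    then have "d i = d j" "s i = s j" using d1[OF ij(1)] d1[OF ij(2)] by (auto simp: f_def)
    then show "i = j" using dist ij by blast
  qed
  have "P \<subseteq> {0..<N} \<times> {1..S}"
  proof
    fix p assume "p \<in> P"
    then obtain i where i: "i \<in> {1..k}" "p = f i" by (auto simp: P_def)
    have "d i - d 1 < N" using dk[OF i(1)] Mk M by auto
    then show "p \<in> {0..<N} \<times> {1..S}" using i sP by (auto simp: f_def)
  qed
  moreover have "card P = k" unfolding P_def using card_image[OF inj] by simp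
  moreover have "(0, s 1) \<in> P" unfolding P_def f_def using k by (auto intro!: image_eqI[where x=1])
  ultimately have P: "P \<in> anchored_patterns N S k" unfolding anchored_patterns_def by blast
  have "Max (fst ` P) = d k - d 1"
  proof (rule Max_eqI)
    show "finite (fst ` P)" unfolding P_def by simp
    show "y \<le> d k - d 1" if y: "y \<in> fst ` P" for y
    proof -
      obtain i where "i \<in> {1..k}" "y = d i - d 1" using y unfolding P_def f_def by auto
      then show ?thesis using dk by (simp add: diff_le_mono)
    qed
    show "d k - d 1 \<in> fst ` P" unfolding P_def f_def using k by force
  qed
  then have "d 1 + M \<le> N - Max (fst ` P)" using Mk d1[of k] k by auto
  moreover have "window_sum P (d 1) (d 1 + M) e = (\<Sum>n=1..M. \<Prod>i=1..k. e (n + d i, s i))"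
  proof -
    have "window_sum P (d 1) (d 1 + M) e
        = (\<Sum>n\<in>{d 1<..d 1 + M}. \<Prod>i\<in>{1..k}. e (n + fst (f i), snd (f i)))"
      unfolding window_sum_def P_def by (intro sum.cong refl) (rule prod.reindex[OF inj, unfolded comp_def])
    also have "\<dots> = (\<Sum>n=1..M. \<Prod>i\<in>{1..k}. e (n + d 1 + fst (f i), snd (f i)))"
      by (rule sum.reindex_bij_witness[where i="\<lambda>n. n + d 1" and j="\<lambda>n. n - d 1"]) auto
    also have "\<dots> = (\<Sum>n=1..M. \<Prod>i=1..k. e (n + d i, s i))"
      using d1 by (intro sum.cong prod.cong refl) (simp add: f_def)
    finally show ?thesis .
  qed
  ultimately show ?thesis using P by blast
qed

lemma Phi_gt_imp_large_window_sum:
  assumes "1 \<le> k" and "k < S * N" and "T < real_of_int (Phi k N S e)"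
  shows "\<exists>P\<in>anchored_patterns N S k. \<exists>a b. b \<le> N - Max (fst ` P) \<and> T < \<bar>window_sum P a b e\<bar>"
proof -
  obtain M d s where adm: "admissible k N S M d s"
    and Phi: "Phi k N S e = \<bar>\<Sum>n=1..M. \<Prod>i=1..k. e (n + d i, s i)\<bar>"
    using Phi_attained[OF assms(1,2)] .
  obtain P a b where "P \<in> anchored_patterns N S k" "b \<le> N - Max (fst ` P)"
    and "window_sum P a b e = (\<Sum>n=1..M. \<Prod>i=1..k. e (n + d i, s i))"
    using correlation_sum_eq_window_sum[OF adm assms(1)] by blast
  moreover from this(3) have "T < \<bar>window_sum P a b e\<bar>" using Phi assms(3) by simp
  ultimately show ?thesis by blast
qed
lemma binomial_le_inner_binomial:
  assumes "r \<le> j" and "j \<le> m - r"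
  shows "m choose r \<le> m choose j"
proof (cases "2 * j \<le> m")
  case True
  then show ?thesis using binomial_mono[OF assms(1)] by simp
next
  case False
  then have "m choose r \<le> m choose (m - j)" using assms by (intro binomial_mono) auto
  also have "\<dots> = m choose j" using assms(2) by (intro binomial_symmetric[symmetric]) simp
  finally show ?thesis .
qed

lemma self_le_binomial: "1 \<le> j \<Longrightarrow> j \<le> m - 1 \<Longrightarrow> m \<le> m choose j"
  using binomial_le_inner_binomial[of 1 j m] by simp

text \<open>The binomials \<open>m choose j\<close> with \<open>r \<le> j \<le> m - r\<close> are at least \<open>(m / r)\<^sup>r\<close>; the other
  \<open>2 (r - 1)\<close> terms are at least \<open>m\<close>.\<close>
lemma sum_binomial_powr_neg_le:
  fixes \<delta> :: real and r m :: nat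
  assumes \<delta>: "\<delta> > 0" and r: "r \<ge> 1" and m: "2 * r \<le> m"
  shows "(\<Sum>j\<in>{1..m-1}. real (m choose j) powr - \<delta>)
         \<le> 2 * (real r - 1) * real m powr - \<delta> + real m * (real m / real r) powr - (real r * \<delta>)"
proof -
  define Outer where "Outer = {j \<in> {1..m-1}. j < r \<or> m - r < j}"
  define Inner where "Inner = {j \<in> {1..m-1}. r \<le> j \<and> j \<le> m - r}"
  have m_pos: "real m > 0" using m r by simp
  have outer: "real (m choose j) powr - \<delta> \<le> real m powr - \<delta>" if "j \<in> Outer" for j
    using that m_pos \<delta> self_le_binomial[of j m] by (intro powr_mono2') (auto simp: Outer_def)
  have inner: "real (m choose j) powr - \<delta> \<le> (real m / real r) powr - (real r * \<delta>)" if "j \<in> Inner" for j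
  proof -
    have "(real m / real r) ^ r \<le> real (m choose r)"
      using m by (intro binomial_ge_n_over_k_pow_k) simp
    also have "\<dots> \<le> real (m choose j)"
      using that by (auto simp: Inner_def intro: binomial_le_inner_binomial)
    finally have "real (m choose j) powr - \<delta> \<le> ((real m / real r) ^ r) powr - \<delta>"
      using m_pos r \<delta> by (intro powr_mono2') auto
    also have "\<dots> = (real m / real r) powr - (real r * \<delta>)"
      using m_pos r by (simp add: powr_realpow[symmetric] powr_powr)
    finally show ?thesis .
  qed
  have "card Outer \<le> card ({1..<r} \<union> {m - r<..<m})"
    by (intro card_mono) (auto simp: Outer_def)
  also have "\<dots> \<le> 2 * (r - 1)"
    using card_Un_le[of "{1..<r}" "{m - r<..<m}"] m r by simp
  finally have card_Outer: "real (card Outer) \<le> 2 * (real r - 1)"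
    using r by (simp add: of_nat_diff)
  have "card Inner \<le> card {1..m-1}" by (intro card_mono) (auto simp: Inner_def)
  then have card_Inner: "card Inner \<le> m" by simp
  have split: "{1..m-1} = Outer \<union> Inner" "Outer \<inter> Inner = {}" "finite Outer" "finite Inner"
    by (auto simp: Outer_def Inner_def)
  have "(\<Sum>j\<in>{1..m-1}. real (m choose j) powr - \<delta>)
      = (\<Sum>j\<in>Outer. real (m choose j) powr - \<delta>) + (\<Sum>j\<in>Inner. real (m choose j) powr - \<delta>)"
    unfolding split(1) by (rule sum.union_disjoint[OF split(3,4,2)])
  also have "\<dots> \<le> real (card Outer) * real m powr - \<delta>
      + real (card Inner) * (real m / real r) powr - (real r * \<delta>)"
    by (intro add_mono sum_bounded_above outer inner)
  also have "\<dots> \<le> 2 * (real r - 1) * real m powr - \<delta> + real m * (real m / real r) powr - (real r * \<delta>)"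
    using card_Outer card_Inner by (intro add_mono mult_right_mono) auto
  finally show ?thesis .
qed

definition binomial_gap :: "nat \<Rightarrow> nat \<Rightarrow> nat \<Rightarrow> real" where
  "binomial_gap S N k = real (S * N choose k) - real (S * (N - 1) choose k)"

lemma binomial_gap_ge:
  assumes "S > 0" and "2 \<le> k" and "k < S * N"
  shows "real (S * N - 1 choose (k - 1)) \<le> binomial_gap S N k"
proof -
  have "S * (N - 1) \<le> S * N - 1" using assms by (cases N) simp_all
  then have "S * (N - 1) choose k \<le> S * N - 1 choose k" by (rule binomial_right_mono)
  moreover have "S * N = Suc (S * N - 1)" "k = Suc (k - 1)" using assms by simp_all
  then have "S * N choose k = (S * N - 1 choose k) + (S * N - 1 choose (k - 1))"
    by (metis binomial_Suc_Suc add.commute)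
  ultimately show ?thesis unfolding binomial_gap_def by simp
qed

lemma binomial_gap_ge_pred:
  assumes "S > 0" and "2 \<le> k" and "k < S * N"
  shows "real (S * N - 1) \<le> binomial_gap S N k"
proof -
  have "S * N - 1 \<le> S * N - 1 choose (k - 1)" using assms by (intro self_le_binomial) auto
  then show ?thesis using binomial_gap_ge[OF assms] of_nat_mono by (blast intro: order_trans)
qed

lemma exp_neg_square_sqrt_ln:
  fixes A c x y :: real
  assumes "1 \<le> A" and "0 < x" and "0 \<le> y"
  shows "exp (- (c * sqrt (2 * y * ln A))\<^sup>2 / (2 * x)) = A powr - (c\<^sup>2 * y / x)"
  using assms by (simp add: powr_def power_mult_distrib field_simps)

lemma exp_neg_square_sqrt_ln_le:
  fixes A c x y :: real
  assumes "1 \<le> A" and "0 < x" and "0 \<le> y" and "4 * x \<le> c\<^sup>2 * y"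
  shows "exp (- (c * sqrt (2 * y * ln A))\<^sup>2 / (2 * x)) \<le> A powr -4"
proof -
  have "4 \<le> c\<^sup>2 * y / x" using assms(2,4) by (simp add: field_simps)
  then show ?thesis
    unfolding exp_neg_square_sqrt_ln[OF assms(1-3)] using assms(1) by (intro powr_mono) auto
qed

lemma div_Suc_div_bounds:
  fixes N K :: nat
  assumes "K \<ge> 1" and "K \<le> N"
  shows "N div (N div K + 1) \<le> K" and "real (N div K + 1) \<le> 2 * real N / real K"
proof -
  have "K * (N div K) + N mod K = N" "N mod K < K" using assms(1) by simp_all
  then have "N < K * (N div K) + K" by linarith
  then have "N < K * (N div K + 1)" by (simp add: algebra_simps)
  then show "N div (N div K + 1) \<le> K"
    by (simp add: less_mult_imp_div_less mult.commute less_imp_le)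
  have "real (N div K) \<le> real N / real K"
    by (rule of_nat_div_le_of_nat)
  moreover have "1 \<le> real N / real K" using assms by simp
  ultimately show "real (N div K + 1) \<le> 2 * real N / real K" by simp
qed

lemma card_Phi_gt_le:
  fixes S N k K :: nat and \<epsilon> \<eta> :: real
  assumes S: "S > 0" and \<epsilon>: "\<epsilon> > 0" and \<eta>: "0 < \<eta>" "\<eta> < 1"
    and K: "K \<ge> 1" "32 \<le> \<eta>\<^sup>2 * K" "K \<le> N" and k: "2 \<le> k" "k < S * N"
  defines "A \<equiv> binomial_gap S N k"
  shows "real (card {e \<in> sign_families N S. (1 + \<epsilon>) * sqrt (2 * real N * ln A) < Phi k N S e})
    \<le> card (sign_families N S) *
        (A * (2 * ((real K + 1)\<^sup>2 * A powr - ((1 - \<eta>) * (1 + \<epsilon>))\<^sup>2 + (real N + 1)\<^sup>2 * A powr -4)))"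
proof -
  let ?F = "sign_families N S"
  define T where "T = (1 + \<epsilon>) * sqrt (2 * real N * ln A)"
  define h where "h = N div K + 1"
  define Bad where "Bad P = {e \<in> ?F. \<exists>a b. b \<le> N - Max (fst ` P) \<and> T < \<bar>window_sum P a b e\<bar>}" for P
  define \<beta> where "\<beta> = 2 * ((real K + 1)\<^sup>2 * A powr - ((1 - \<eta>) * (1 + \<epsilon>))\<^sup>2 + (real N + 1)\<^sup>2 * A powr -4)"
  have N: "real N \<ge> 1" using K by simp
  have "real (S * N - 1) \<le> A" unfolding A_def by (rule binomial_gap_ge_pred[OF S k])
  then have A: "A \<ge> 2" using k by linarith
  then have T: "T > 0" using \<epsilon> N by (simp add: T_def)
  have h: "h \<ge> 1" "N div h \<le> K" "4 * real h \<le> (\<eta> * (1 + \<epsilon>) / 2)\<^sup>2 * N"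
  proof -
    have "16 * real h \<le> 32 * real N / real K"
      using div_Suc_div_bounds(2)[OF K(1,3)] by (simp add: h_def)
    also have "\<dots> \<le> \<eta>\<^sup>2 * N" using K N by (simp add: field_simps)
    also have "\<dots> \<le> \<eta>\<^sup>2 * (1 + \<epsilon>)\<^sup>2 * N"
      using \<epsilon> mult_left_mono[of 1 "(1 + \<epsilon>)\<^sup>2" "\<eta>\<^sup>2"] by (intro mult_right_mono) (simp_all add: one_le_power)
    finally show "4 * real h \<le> (\<eta> * (1 + \<epsilon>) / 2)\<^sup>2 * N"
      by (simp add: power_mult_distrib power_divide)
  qed (use div_Suc_div_bounds(1)[OF K(1,3)] in \<open>simp_all add: h_def\<close>)
  have tail_long: "exp (- ((1 - \<eta>) * T)\<^sup>2 / (2 * real N)) = A powr - ((1 - \<eta>) * (1 + \<epsilon>))\<^sup>2"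
    using exp_neg_square_sqrt_ln[of A N N "(1 - \<eta>) * (1 + \<epsilon>)"] A N by (simp add: T_def mult.assoc)
  have tail_short: "exp (- (\<eta> * T / 2)\<^sup>2 / (2 * real h)) \<le> A powr -4"
    using exp_neg_square_sqrt_ln_le[of A h N "\<eta> * (1 + \<epsilon>) / 2"] A h by (simp add: T_def mult_ac)
  have Bad: "real (card (Bad P)) \<le> card ?F * \<beta>" if P: "P \<in> anchored_patterns N S k" for P
  proof -
    obtain s\<^sub>0 where "sign_pattern P (Max (fst ` P)) s\<^sub>0 S"
      using anchored_pattern_sign_pattern(1)[OF P] k by auto
    from sign_pattern.card_large_window_sum[OF this h(1) T \<eta>, of N]
    have "real (card (Bad P)) \<le> 2 * card ?F *
        ((real ((N - Max (fst ` P)) div h) + 1)\<^sup>2 * exp (- ((1 - \<eta>) * T)\<^sup>2 / (2 * real N))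
         + (real (N - Max (fst ` P)) + 1)\<^sup>2 * exp (- (\<eta> * T / 2)\<^sup>2 / (2 * real h)))"
      unfolding Bad_def .
    also have "\<dots> \<le> card ?F * \<beta>"
      unfolding \<beta>_def tail_long mult.assoc[symmetric]
      using tail_short h(2) div_le_mono[of "N - Max (fst ` P)" N h]
      by (intro mult_left_mono add_mono mult_mono power_mono) auto
    finally show ?thesis .
  qed
  have "{e \<in> ?F. T < Phi k N S e} \<subseteq> (\<Union>P\<in>anchored_patterns N S k. Bad P)"
    using Phi_gt_imp_large_window_sum[of k S N T] k unfolding Bad_def by fastforce
  then have "real (card {e \<in> ?F. T < Phi k N S e}) \<le> real (card (\<Union>P\<in>anchored_patterns N S k. Bad P))"
    using finite_anchored_patterns by (intro of_nat_mono card_mono) (auto simp: Bad_def finite_sign_families)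
  also have "\<dots> \<le> real (card (anchored_patterns N S k)) * (card ?F * \<beta>)"
    by (rule card_UN_le_card_mult[OF finite_anchored_patterns Bad])
  finally show ?thesis
    by (simp add: real_card_anchored_patterns T_def \<beta>_def A_def binomial_gap_def mult_ac)
qed

definition Phi_bound_prob :: "nat \<Rightarrow> real \<Rightarrow> nat \<Rightarrow> real" where
  "Phi_bound_prob S \<epsilon> N = measure_pmf.prob (pmf_of_set (sign_families N S))
     {e. \<forall>k. 2 \<le> k \<and> k < S * N \<longrightarrow>
          real_of_int (Phi k N S e) \<le> (1 + \<epsilon>) * sqrt (2 * real N * ln (binomial_gap S N k))}"

lemma prob_pmf_of_set_eq_one_minus:
  assumes "finite F" and "F \<noteq> {}"
  shows "measure_pmf.prob (pmf_of_set F) X = 1 - real (card (F - X)) / real (card F)"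
proof -
  have "real (card F) > 0" using assms by (simp add: card_gt_0_iff)
  moreover have "real (card (F \<inter> X)) = real (card F) - real (card (F - X))"
    using card_Int_Diff[OF assms(1), of X] by simp
  ultimately show ?thesis
    using assms by (simp add: measure_pmf_of_set diff_divide_distrib)
qed

lemma Phi_bound_prob_ge:
  fixes S N K :: nat and \<epsilon> \<eta> :: real
  assumes S: "S > 0" and \<epsilon>: "\<epsilon> > 0" and \<eta>: "0 < \<eta>" "\<eta> < 1"
    and K: "K \<ge> 1" "32 \<le> \<eta>\<^sup>2 * K" "K \<le> N"
  shows "Phi_bound_prob S \<epsilon> N \<ge> 1 - (\<Sum>k\<in>{2..<S*N}. binomial_gap S N k *
      (2 * ((real K + 1)\<^sup>2 * binomial_gap S N k powr - ((1 - \<eta>) * (1 + \<epsilon>))\<^sup>2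
          + (real N + 1)\<^sup>2 * binomial_gap S N k powr -4)))"
    (is "_ \<ge> 1 - (\<Sum>k\<in>_. ?bound k)")
proof -
  let ?F = "sign_families N S"
  define T where "T k = (1 + \<epsilon>) * sqrt (2 * real N * ln (binomial_gap S N k))" for k
  define Good where "Good = {e. \<forall>k. 2 \<le> k \<and> k < S * N \<longrightarrow> real_of_int (Phi k N S e) \<le> T k}"
  define Bad where "Bad k = {e \<in> ?F. T k < Phi k N S e}" for k
  have F: "finite ?F" "real (card ?F) > 0"
    using finite_sign_families sign_families_nonempty by (simp_all add: card_gt_0_iff)
  have "?F - Good \<subseteq> (\<Union>k\<in>{2..<S*N}. Bad k)"
    by (auto simp: Good_def Bad_def not_le)
  then have "real (card (?F - Good)) \<le> real (card (\<Union>k\<in>{2..<S*N}. Bad k))"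
    by (intro of_nat_mono card_mono) (auto simp: Bad_def F(1))
  also have "\<dots> \<le> (\<Sum>k\<in>{2..<S*N}. real (card (Bad k)))"
    using card_UN_le[of "{2..<S*N}" Bad] by (simp flip: of_nat_sum)
  also have "\<dots> \<le> (\<Sum>k\<in>{2..<S*N}. card ?F * ?bound k)"
    unfolding Bad_def T_def using card_Phi_gt_le[OF S \<epsilon> \<eta> K] by (intro sum_mono) auto
  finally have "real (card (?F - Good)) / card ?F \<le> (\<Sum>k\<in>{2..<S*N}. ?bound k)"
    using F(2) by (simp add: divide_le_eq sum_distrib_left mult.commute)
  then show ?thesis
    unfolding Phi_bound_prob_def
      prob_pmf_of_set_eq_one_minus[OF finite_sign_families sign_families_nonempty]
    by (simp add: Good_def T_def)
qed
lemma mult_powr_neg_le: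
  fixes A B \<delta> c\<^sub>1 c\<^sub>2 :: real
  assumes B: "0 < B" "B \<le> A" and \<delta>: "\<delta> > 0" and c: "c\<^sub>1 \<ge> 0" "c\<^sub>2 \<ge> 0"
  shows "A * (2 * (c\<^sub>1 * A powr - (1 + \<delta>) + c\<^sub>2 * A powr -4))
         \<le> 2 * (c\<^sub>1 * B powr - \<delta> + c\<^sub>2 * B powr -3)"
proof -
  have A: "A > 0" using B by simp
  have "A * (2 * (c\<^sub>1 * A powr - (1 + \<delta>) + c\<^sub>2 * A powr -4))
      = 2 * (c\<^sub>1 * (A * A powr - (1 + \<delta>)) + c\<^sub>2 * (A * A powr -4))"
    by (simp add: algebra_simps)
  also have "\<dots> = 2 * (c\<^sub>1 * A powr - \<delta> + c\<^sub>2 * A powr -3)"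
    using powr_add[of A 1 "- (1 + \<delta>)"] powr_add[of A 1 "-4"] A by simp
  also have "\<dots> \<le> 2 * (c\<^sub>1 * B powr - \<delta> + c\<^sub>2 * B powr -3)"
    using B \<delta> c by (intro mult_left_mono add_mono powr_mono2') auto
  finally show ?thesis .
qed

lemma mult_powr_ratio_le:
  fixes m r \<delta> t :: real
  assumes "1 \<le> r" and "r \<le> m" and "t \<le> r * \<delta>"
  shows "m * (m / r) powr - (r * \<delta>) \<le> r powr t * m powr (1 - t)"
proof -
  have "m * (m / r) powr - (r * \<delta>) \<le> m * (m / r) powr - t"
    using assms by (intro mult_left_mono powr_mono) auto
  also have "\<dots> = r powr t * (m * m powr - t)"
    using assms by (simp add: powr_divide powr_minus field_simps)
  also have "m * m powr - t = m powr (1 - t)"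
    using powr_add[of m 1 "- t"] assms by simp
  finally show ?thesis .
qed

lemma sum_binomial_gap_terms_le:
  fixes S N K r :: nat and \<delta> :: real
  assumes S: "S > 0" and \<delta>: "\<delta> > 0" and r: "r \<ge> 1" "2 \<le> real r * \<delta>"
    and m: "2 * r \<le> S * N - 1" "4 \<le> S * N - 1"
  shows "(\<Sum>k\<in>{2..<S*N}. binomial_gap S N k * (2 * ((real K + 1)\<^sup>2 * binomial_gap S N k powr - (1 + \<delta>)
            + (real N + 1)\<^sup>2 * binomial_gap S N k powr -4)))
     \<le> 2 * (real K + 1)\<^sup>2 * (2 * (real r - 1) * real (S * N - 1) powr - \<delta> + (real r)\<^sup>2 / real (S * N - 1))
       + 36 * (real N + 1)\<^sup>2 * real (S * N - 1) powr -3"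
proof -
  define m where "m = S * N - 1"
  define g where "g j = 2 * ((real K + 1)\<^sup>2 * real (m choose j) powr - \<delta>
      + (real N + 1)\<^sup>2 * real (m choose j) powr -3)" for j
  have m4: "real m \<ge> 4" using m by (simp add: m_def)
  have "(\<Sum>k\<in>{2..<S*N}. binomial_gap S N k * (2 * ((real K + 1)\<^sup>2 * binomial_gap S N k powr - (1 + \<delta>)
            + (real N + 1)\<^sup>2 * binomial_gap S N k powr -4)))
      \<le> (\<Sum>k\<in>{2..<S*N}. g (k - 1))"
  proof (intro sum_mono)
    fix k assume k: "k \<in> {2..<S*N}"
    have "m \<le> m choose (k - 1)" using k by (intro self_le_binomial) (auto simp: m_def)
    then have "real m \<le> real (m choose (k - 1))" by simp
    then have "0 < real (m choose (k - 1))" using m4 by linarith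
    then show "binomial_gap S N k * (2 * ((real K + 1)\<^sup>2 * binomial_gap S N k powr - (1 + \<delta>)
            + (real N + 1)\<^sup>2 * binomial_gap S N k powr -4)) \<le> g (k - 1)"
      unfolding g_def using binomial_gap_ge[OF S, of k N] k \<delta>
      by (intro mult_powr_neg_le) (auto simp: m_def)
  qed
  also have "(\<Sum>k\<in>{2..<S*N}. g (k - 1)) = (\<Sum>j\<in>{1..m-1}. g j)"
    by (rule sum.reindex_bij_witness[where i="\<lambda>j. j + 1" and j="\<lambda>k. k - 1"]) (use m in \<open>auto simp: m_def\<close>)
  also have "\<dots> = 2 * (real K + 1)\<^sup>2 * (\<Sum>j\<in>{1..m-1}. real (m choose j) powr - \<delta>)
      + 2 * (real N + 1)\<^sup>2 * (\<Sum>j\<in>{1..m-1}. real (m choose j) powr -3)"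
    by (simp add: g_def sum.distrib sum_distrib_left algebra_simps)
  also have "\<dots> \<le> 2 * (real K + 1)\<^sup>2 * (2 * (real r - 1) * real m powr - \<delta> + (real r)\<^sup>2 / real m)
      + 2 * (real N + 1)\<^sup>2 * (18 * real m powr -3)"
  proof (intro add_mono mult_left_mono)
    have "real m * (real m / real r) powr - (real r * \<delta>) \<le> real r powr 2 * real m powr (1 - 2)"
      using m r by (intro mult_powr_ratio_le) (auto simp: m_def)
    then show "(\<Sum>j\<in>{1..m-1}. real (m choose j) powr - \<delta>)
        \<le> 2 * (real r - 1) * real m powr - \<delta> + (real r)\<^sup>2 / real m"
      using sum_binomial_powr_neg_le[OF \<delta> r(1), of m] m r
      by (simp add: m_def powr_minus_divide)
    have "real m * (real m / real 2) powr - (real 2 * 3) \<le> real 2 powr 4 * real m powr (1 - 4)"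
      using m by (intro mult_powr_ratio_le) (auto simp: m_def)
    then show "(\<Sum>j\<in>{1..m-1}. real (m choose j) powr -3) \<le> 18 * real m powr -3"
      using sum_binomial_powr_neg_le[of 3 2 m] m by (simp add: m_def)
  qed auto
  finally show ?thesis by (simp add: m_def algebra_simps)
qed

lemma error_term_le:
  fixes N S K r :: nat and \<delta> :: real
  assumes S: "S > 0" and N: "N \<ge> 2" and \<delta>: "\<delta> > 0" and r: "r \<ge> 1"
  shows "2 * (real K + 1)\<^sup>2 * (2 * (real r - 1) * real (S * N - 1) powr - \<delta> + (real r)\<^sup>2 / real (S * N - 1))
       + 36 * (real N + 1)\<^sup>2 * real (S * N - 1) powr -3
     \<le> 4 * (real K + 1)\<^sup>2 * (real r - 1) * (real N - 1) powr - \<delta>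
       + (2 * (real K + 1)\<^sup>2 * (real r)\<^sup>2 + 324) / (real N - 1)"
proof -
  define m where "m = real (S * N - 1)"
  define n where "n = real N - 1"
  have nm: "n \<le> m" using S N by (simp add: m_def n_def of_nat_diff)
  have n: "n \<ge> 1" using N by (simp add: n_def)
  have "(real N + 1)\<^sup>2 * m powr -3 \<le> (3 * m)\<^sup>2 * (1 / m ^ 3)"
    using nm n by (intro mult_mono power_mono) (auto simp: n_def powr_minus_divide powr_numeral)
  also have "\<dots> = 9 / m" using nm n by (simp add: power2_eq_square power3_eq_cube)
  also have "\<dots> \<le> 9 / n" using nm n by (intro divide_left_mono) auto
  finally have "(real N + 1)\<^sup>2 * m powr -3 \<le> 9 / n" .
  moreover have "m powr - \<delta> \<le> n powr - \<delta>" using nm n \<delta> by (intro powr_mono2') auto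
  moreover have "(real r)\<^sup>2 / m \<le> (real r)\<^sup>2 / n" using nm n by (intro divide_left_mono) auto
  ultimately have "2 * (real K + 1)\<^sup>2 * (2 * (real r - 1) * m powr - \<delta> + (real r)\<^sup>2 / m)
      + 36 * ((real N + 1)\<^sup>2 * m powr -3)
      \<le> 2 * (real K + 1)\<^sup>2 * (2 * (real r - 1) * n powr - \<delta> + (real r)\<^sup>2 / n) + 36 * (9 / n)"
    using r by (intro add_mono mult_left_mono) auto
  also have "\<dots> = 4 * (real K + 1)\<^sup>2 * (real r - 1) * n powr - \<delta> + (2 * (real K + 1)\<^sup>2 * (real r)\<^sup>2 + 324) / n"
    using n by (simp add: field_simps)
  finally show ?thesis unfolding m_def n_def by (simp add: mult.assoc)
qed

lemma error_term_tendsto_zero: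
  fixes c\<^sub>1 c\<^sub>2 \<delta> :: real
  assumes "\<delta> > 0"
  shows "(\<lambda>N. c\<^sub>1 * (real N - 1) powr - \<delta> + c\<^sub>2 / (real N - 1)) \<longlonglongrightarrow> 0"
proof -
  have N: "filterlim (\<lambda>N. real N - 1) at_top sequentially"
    by (rule filterlim_tendsto_add_at_top[OF tendsto_const filterlim_real_sequentially, of "-1", simplified])
  have "(\<lambda>N. c\<^sub>1 * (real N - 1) powr - \<delta> + c\<^sub>2 / (real N - 1)) \<longlonglongrightarrow> c\<^sub>1 * 0 + 0"
    using assms
    by (intro tendsto_add tendsto_mult tendsto_const tendsto_neg_powr N
        tendsto_divide_0[OF tendsto_const] filterlim_at_top_imp_at_infinity) auto
  then show ?thesis by simp
qed

text \<open>With \<open>\<eta> = \<epsilon> / (2 (1 + \<epsilon>))\<close> the long windows get the exponent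
  \<open>((1 - \<eta>) (1 + \<epsilon>))\<^sup>2 = (1 + \<epsilon>/2)\<^sup>2 = 1 + \<delta>\<close>; the binomial sum is split at \<open>r \<ge> 2 / \<delta>\<close>.\<close>
lemma Phi_bound_prob_eventually_ge:
  assumes S: "S > 0" and \<epsilon>: "\<epsilon> > 0"
  obtains \<delta> c\<^sub>1 c\<^sub>2 :: real where "\<delta> > 0"
    and "\<forall>\<^sub>F N in sequentially. 1 - (c\<^sub>1 * (real N - 1) powr - \<delta> + c\<^sub>2 / (real N - 1)) \<le> Phi_bound_prob S \<epsilon> N"
proof -
  define \<eta> where "\<eta> = \<epsilon> / (2 * (1 + \<epsilon>))"
  define \<delta> where "\<delta> = ((1 - \<eta>) * (1 + \<epsilon>))\<^sup>2 - 1"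
  define K where "K = nat \<lceil>32 / \<eta>\<^sup>2\<rceil> + 1"
  define r where "r = nat \<lceil>2 / \<delta>\<rceil> + 1"
  have \<eta>: "0 < \<eta>" "\<eta> < 1" using \<epsilon> by (auto simp: \<eta>_def field_simps)
  have "(1 - \<eta>) * (1 + \<epsilon>) = 1 + \<epsilon> / 2" using \<epsilon> by (simp add: \<eta>_def field_simps)
  then have "\<delta> = (1 + \<epsilon> / 2)\<^sup>2 - 1" by (simp only: \<delta>_def)
  also have "\<dots> = \<epsilon> + \<epsilon>\<^sup>2 / 4" by (simp add: power2_eq_square field_simps)
  finally have "\<delta> = \<epsilon> + \<epsilon>\<^sup>2 / 4" .
  then have \<delta>: "\<delta> > 0" using \<epsilon> by (simp add: add_pos_nonneg)
  have "32 / \<eta>\<^sup>2 \<le> real K" unfolding K_def by linarith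
  then have K: "K \<ge> 1" "32 \<le> \<eta>\<^sup>2 * K" using \<eta> by (simp_all add: K_def field_simps)
  have "2 / \<delta> \<le> real r" unfolding r_def by linarith
  then have r: "r \<ge> 1" "2 \<le> real r * \<delta>" using \<delta> by (simp_all add: r_def field_simps)
  have bound: "1 - (4 * (real K + 1)\<^sup>2 * (real r - 1) * (real N - 1) powr - \<delta>
        + (2 * (real K + 1)\<^sup>2 * (real r)\<^sup>2 + 324) / (real N - 1)) \<le> Phi_bound_prob S \<epsilon> N"
    if N: "N \<ge> max K (2 * r + 5)" for N
  proof -
    have "N \<le> S * N" "2 * r + 5 \<le> N" "K \<le> N" using S N by simp_all
    then have m: "2 * r \<le> S * N - 1" "4 \<le> S * N - 1" by linarith+
    show ?thesis
      using Phi_bound_prob_ge[OF S \<epsilon> \<eta> K, of N] sum_binomial_gap_terms_le[OF S \<delta> r m, of K]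
        error_term_le[OF S _ \<delta> r(1), of N K] \<open>K \<le> N\<close> \<open>2 * r + 5 \<le> N\<close>
      unfolding \<delta>_def by simp
  qed
  have "\<forall>\<^sub>F N in sequentially. 1 - (4 * (real K + 1)\<^sup>2 * (real r - 1) * (real N - 1) powr - \<delta>
        + (2 * (real K + 1)\<^sup>2 * (real r)\<^sup>2 + 324) / (real N - 1)) \<le> Phi_bound_prob S \<epsilon> N"
    using eventually_ge_at_top[of "max K (2 * r + 5)"] by eventually_elim (rule bound)
  with \<delta> show ?thesis by (rule that)
qed

theorem theorem3:
  fixes S :: nat and \<epsilon> :: real
  assumes "S > 0" and "\<epsilon> > 0"
  shows "(\<lambda>N. measure_pmf.prob (pmf_of_set (sign_families N S))
            {e. \<forall>k. 2 \<le> k \<and> k < S * N \<longrightarrow>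
                 real_of_int (Phi k N S e) \<le> (1 + \<epsilon>) *
                   sqrt (2 * real N * ln (real ((S * N) choose k) - real ((S * (N - 1)) choose k)))})
         \<longlonglongrightarrow> 1"
proof -
  obtain \<delta> c\<^sub>1 c\<^sub>2 :: real where "\<delta> > 0"
    and lower: "\<forall>\<^sub>F N in sequentially. 1 - (c\<^sub>1 * (real N - 1) powr - \<delta> + c\<^sub>2 / (real N - 1))
                  \<le> Phi_bound_prob S \<epsilon> N"
    using Phi_bound_prob_eventually_ge[OF assms] .
  have upper: "\<forall>\<^sub>F N in sequentially. Phi_bound_prob S \<epsilon> N \<le> 1"
    by (simp add: Phi_bound_prob_def measure_pmf.prob_le_1)
  have "(\<lambda>N. 1 - (c\<^sub>1 * (real N - 1) powr - \<delta> + c\<^sub>2 / (real N - 1))) \<longlonglongrightarrow> 1 - 0"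
    by (intro tendsto_diff tendsto_const error_term_tendsto_zero \<open>\<delta> > 0\<close>)
  then have "Phi_bound_prob S \<epsilon> \<longlonglongrightarrow> 1"
    by (intro tendsto_sandwich[OF lower upper]) simp_all
  then show ?thesis unfolding Phi_bound_prob_def[abs_def] binomial_gap_def .
qed

end
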